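(* Let $d\in\mathbb N\cup\{\infty\}$, $C>0$, and let ${\boldsymbol\gamma}$ be product weights. (1) If ${\boldsymbol\gamma}\in\mathcal S_{d,C}$, then $c:=\prod_{j\in[d]}(1+C^2\gamma_j)\in[1,\infty)$, the product weights ${\boldsymbol\eta}$ given by $\eta_u=C^{2|u|}\gamma_u$ lie in $\mathcal S_{d,C}$, and ${\boldsymbol\eta}\le T^\uparrow_{d,C}{\boldsymbol\gamma}\le c\,{\boldsymbol\eta}$. (2) If ${\boldsymbol\gamma}\in\mathcal M_d$, then with $c':=\prod_{j\in[d]}(1-\gamma_j)\in[0,1]$ and the product weights ${\boldsymbol\zeta}$ given by $\zeta_u=C^{-2|u|}\gamma_u$ we have $c'\,{\boldsymbol\zeta}\le T^\downarrow_{d,C}{\boldsymbol\gamma}\le{\boldsymbol\zeta}$. Furthermore ${\boldsymbol\zeta}\in\mathcal S_{d,C}$ iff ${\boldsymbol\gamma}\in\mathcal S_{d,C}$.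
   Context: Write $[d]=\{1,\dots,d\}$ if $d\in\mathbb N$ and $[d]=\mathbb N$ if $d=\infty$; $[s]=\{1,\dots,s\}$. $\mathcal U_d$ is the set of finite subsets of $[d]$; weights are families $(\gamma_u)_{u\in\mathcal U_d}$ of non-negative reals ($\mathcal W_d$), compared componentwise. Product weights: $\gamma_u=\prod_{j\in u}\gamma_j$, $\gamma_\emptyset=1$, for a non-increasing sequence $(\gamma_j)_{j\in[d]}$ of non-negative reals. $(\Delta_v{\boldsymbol\gamma})_u=\sum_{w\subseteq v}(-1)^{|w|}\gamma_{u\cup w}$; $\mathcal M_d$ is the set of weights with $\Delta_v{\boldsymbol\gamma}\ge\mathbf 0$ for all $v$. For $C>0$: $\mathcal S_{d,C}=\{{\boldsymbol\gamma}\in\mathcal W_d:\sum_vC^{2|v|}\gamma_v<\infty\}$; $(T^\uparrow_{d,C}{\boldsymbol\gamma})_u=\sum_{v\supseteq u}C^{2|v|}\gamma_v$ on $\mathcal S_{d,C}$; on $\mathcal M_d$, $(T^\downarrow_{d,C}{\boldsymbol\gamma})_u=C^{-2|u|}(\Delta_{[d]\setminus u}{\boldsymbol\gamma})_u$ if $d\in\mathbb N$ and $C^{-2|u|}\lim_{s\to\infty}(\Delta_{[s]\setminus u}{\boldsymbol\gamma})_u$ if $d=\infty$. Infinite products are understood as limits of partial products. *)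

theory Defs
  imports "HOL-Analysis.Analysis" "HOL-Library.Extended_Nat"
begin

definition idx :: "enat \<Rightarrow> nat set" where
  "idx d = {j. 1 \<le> j \<and> enat j \<le> d}"

definition U :: "enat \<Rightarrow> nat set set" where
  "U d = {u. finite u \<and> u \<subseteq> idx d}"

definition pw :: "(nat \<Rightarrow> real) \<Rightarrow> nat set \<Rightarrow> real" where
  "pw g u = (\<Prod>j\<in>u. g j)"

definition is_pw_seq :: "enat \<Rightarrow> (nat \<Rightarrow> real) \<Rightarrow> bool" where
  "is_pw_seq d g \<longleftrightarrow> (\<forall>j\<in>idx d. 0 \<le> g j) \<and>
      (\<forall>i\<in>idx d. \<forall>j\<in>idx d. i \<le> j \<longrightarrow> g j \<le> g i)"

definition S :: "enat \<Rightarrow> real \<Rightarrow> (nat set \<Rightarrow> real) \<Rightarrow> bool" where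
  "S d C \<gamma> \<longleftrightarrow> (\<forall>u\<in>U d. 0 \<le> \<gamma> u) \<and>
      (\<lambda>v. C ^ (2 * card v) * \<gamma> v) summable_on U d"

definition Tup :: "enat \<Rightarrow> real \<Rightarrow> (nat set \<Rightarrow> real) \<Rightarrow> nat set \<Rightarrow> real" where
  "Tup d C \<gamma> u = infsum (\<lambda>v. C ^ (2 * card v) * \<gamma> v) {v\<in>U d. u \<subseteq> v}"

definition Delta :: "nat set \<Rightarrow> (nat set \<Rightarrow> real) \<Rightarrow> nat set \<Rightarrow> real" where
  "Delta v \<gamma> u = (\<Sum>w\<in>Pow v. (-1) ^ card w * \<gamma> (u \<union> w))"

definition M :: "enat \<Rightarrow> (nat set \<Rightarrow> real) \<Rightarrow> bool" where
  "M d \<gamma> \<longleftrightarrow> (\<forall>u\<in>U d. 0 \<le> \<gamma> u) \<and> (\<forall>u\<in>U d. \<forall>v\<in>U d. 0 \<le> Delta v \<gamma> u)"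

definition Tdown :: "enat \<Rightarrow> real \<Rightarrow> (nat set \<Rightarrow> real) \<Rightarrow> nat set \<Rightarrow> real" where
  "Tdown d C \<gamma> u = inverse (C ^ (2 * card u)) *
     (case d of enat n \<Rightarrow> Delta ({1..n} - u) \<gamma> u
              | \<infinity> \<Rightarrow> lim (\<lambda>s. Delta ({1..s} - u) \<gamma> u))"

definition prod_over_d :: "enat \<Rightarrow> (nat \<Rightarrow> real) \<Rightarrow> real" where
  "prod_over_d d f = (case d of enat n \<Rightarrow> (\<Prod>j=1..n. f j)
                        | \<infinity> \<Rightarrow> lim (\<lambda>n. \<Prod>j=1..n. f j))"

definition prod_over_d_conv :: "enat \<Rightarrow> (nat \<Rightarrow> real) \<Rightarrow> bool" where
  "prod_over_d_conv d f \<longleftrightarrow> (d = \<infinity> \<longrightarrow> convergent (\<lambda>n. \<Prod>j=1..n. f j))"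

end

theory Submission
  imports Defs
begin

text \<open>For product weights everything factorises. Summing \<open>C^(2|v|) \<gamma>_v\<close> over the finite
supersets \<open>v \<supseteq> u\<close> inside a finite \<open>J\<close> gives \<open>\<eta>_u \<Prod>_{j \<in> J - u} (1 + C^2 \<gamma>_j)\<close>, and
\<open>(\<Delta>_{[s] - u} \<gamma>)_u = \<gamma>_u \<Prod>_{j \<in> [s] - u} (1 - \<gamma>_j)\<close>. Both products are squeezed between 1 and
the full product over \<open>[d]\<close>, which exists by monotonicity: for \<open>1 + C^2 \<gamma>_j\<close> because
\<open>\<Sum>_j \<gamma>_j \<le> \<Sum>_v \<gamma>_v\<close> bounds it by \<open>exp (C^2 \<Sum>_j \<gamma>_j)\<close>, for \<open>1 - \<gamma>_j\<close> because
\<open>\<gamma>_j \<le> 1\<close> is the condition \<open>(\<Delta>_{{j}} \<gamma>)_\<emptyset> \<ge> 0\<close>. Finally, product weights \<open>pw h\<close> are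
summable over finite sets iff the sums of \<open>h\<close> are bounded, since
\<open>\<Sum>_{j \<in> J} h_j \<le> \<Sum>_{v \<subseteq> J} pw h v = \<Prod>_{j \<in> J} (1 + h_j) \<le> exp (\<Sum>_{j \<in> J} h_j)\<close>; this
condition is invariant under scaling \<open>h\<close> by a positive constant.\<close>

lemma sum_Pow_pw:
  assumes "finite J"
  shows "(\<Sum>w\<in>Pow J. pw f w) = (\<Prod>j\<in>J. 1 + f j)"
  unfolding pw_def using prod_add[OF assms, of f "\<lambda>_. 1"] by (simp add: add.commute)

lemma pw_nonneg: "(\<And>j. j \<in> v \<Longrightarrow> 0 \<le> f j) \<Longrightarrow> 0 \<le> pw f v"
  unfolding pw_def by (rule prod_nonneg)

lemma pw_union: "finite u \<Longrightarrow> finite w \<Longrightarrow> u \<inter> w = {} \<Longrightarrow> pw f (u \<union> w) = pw f u * pw f w"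
  unfolding pw_def by (rule prod.union_disjoint)

lemma pw_scale: "pw (\<lambda>j. a * f j) v = a ^ card v * pw f v"
  unfolding pw_def by (simp add: prod.distrib)

lemma pw_divide: "pw (\<lambda>j. f j / a) v = pw f v / a ^ card v"
  for f :: "nat \<Rightarrow> real"
  unfolding pw_def by (simp add: prod_dividef)

lemma Delta_pw:
  assumes "finite v" "finite u" "u \<inter> v = {}"
  shows "Delta v (pw g) u = pw g u * (\<Prod>j\<in>v. 1 - g j)"
proof -
  have "Delta v (pw g) u = (\<Sum>w\<in>Pow v. pw g u * pw (\<lambda>j. -1 * g j) w)"
    unfolding Delta_def pw_scale
  proof (intro sum.cong refl)
    fix w assume "w \<in> Pow v"
    then have "pw g (u \<union> w) = pw g u * pw g w"
      using assms by (intro pw_union) (auto dest: finite_subset)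
    then show "(-1) ^ card w * pw g (u \<union> w) = pw g u * ((-1) ^ card w * pw g w)"
      by simp
  qed
  also have "\<dots> = pw g u * (\<Prod>j\<in>v. 1 - g j)"
    using assms by (simp add: sum_distrib_left[symmetric] sum_Pow_pw)
  finally show ?thesis .
qed

lemma Delta_pw_interval:
  assumes "finite u"
  shows "Delta ({1..s} - u) (pw g) u = pw g u * (\<Prod>j=1..s. if j \<in> u then 1 else 1 - g j)"
  using assms by (simp add: Delta_pw prod.If_cases Diff_eq)

lemma sum_le_infsum_pw:
  fixes h :: "nat \<Rightarrow> real"
  assumes nonneg: "\<And>j. j \<in> I \<Longrightarrow> 0 \<le> h j" and summable: "pw h summable_on Fpow I"
    and J: "J \<in> Fpow I"
  shows "sum h J \<le> infsum (pw h) (Fpow I)"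
proof -
  have "sum h J = sum (pw h) ((\<lambda>j. {j}) ` J)"
    by (subst sum.reindex) (auto simp: pw_def)
  also have "\<dots> \<le> infsum (pw h) (Fpow I)"
    using J nonneg by (intro finite_sum_le_infsum[OF summable] pw_nonneg) (auto simp: Fpow_def)
  finally show ?thesis .
qed

lemma pw_summable_on_Fpow_iff:
  fixes h :: "nat \<Rightarrow> real"
  assumes nonneg: "\<And>j. j \<in> I \<Longrightarrow> 0 \<le> h j"
  shows "pw h summable_on Fpow I \<longleftrightarrow> (\<exists>B. \<forall>J\<in>Fpow I. sum h J \<le> B)"
proof
  assume "pw h summable_on Fpow I"
  then show "\<exists>B. \<forall>J\<in>Fpow I. sum h J \<le> B"
    using sum_le_infsum_pw[OF nonneg] by (intro exI[of _ "infsum (pw h) (Fpow I)"] ballI)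
next
  assume "\<exists>B. \<forall>J\<in>Fpow I. sum h J \<le> B"
  then obtain B where B: "\<And>J. J \<in> Fpow I \<Longrightarrow> sum h J \<le> B" by blast
  show "pw h summable_on Fpow I"
  proof (rule nonneg_bdd_above_summable_on)
    show "0 \<le> pw h v" if "v \<in> Fpow I" for v
      using that nonneg by (intro pw_nonneg) (auto simp: Fpow_def)
    show "bdd_above (sum (pw h) ` {F. F \<subseteq> Fpow I \<and> finite F})"
    proof (rule bdd_aboveI2)
      fix F assume F: "F \<in> {F. F \<subseteq> Fpow I \<and> finite F}"
      then have J: "\<Union>F \<in> Fpow I" by (auto simp: Fpow_def)
      then have "sum (pw h) F \<le> sum (pw h) (Pow (\<Union>F))"
        using F by (intro sum_mono2 pw_nonneg nonneg) (auto simp: Fpow_def)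
      also have "\<dots> = (\<Prod>j\<in>\<Union>F. 1 + h j)"
        using J by (simp add: sum_Pow_pw Fpow_def)
      also have "\<dots> \<le> exp (sum h (\<Union>F))"
        using J nonneg by (intro prod_le_exp_sum) (auto simp: Fpow_def)
      also have "\<dots> \<le> exp B"
        using B[OF J] by simp
      finally show "sum (pw h) F \<le> exp B" .
    qed
  qed
qed

lemma pw_scaled_summable_on_Fpow_iff:
  fixes h :: "nat \<Rightarrow> real"
  assumes nonneg: "\<And>j. j \<in> I \<Longrightarrow> 0 \<le> h j" and "a > 0"
  shows "pw (\<lambda>j. a * h j) summable_on Fpow I \<longleftrightarrow> pw h summable_on Fpow I"
proof -
  have "(\<exists>B. \<forall>J\<in>Fpow I. a * sum h J \<le> B) \<longleftrightarrow> (\<exists>B. \<forall>J\<in>Fpow I. sum h J \<le> B)"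
  proof
    assume "\<exists>B. \<forall>J\<in>Fpow I. a * sum h J \<le> B"
    then obtain B where "\<forall>J\<in>Fpow I. a * sum h J \<le> B" by blast
    then have "\<forall>J\<in>Fpow I. sum h J \<le> B / a"
      using \<open>a > 0\<close> by (simp add: pos_le_divide_eq mult.commute)
    then show "\<exists>B. \<forall>J\<in>Fpow I. sum h J \<le> B" by blast
  next
    assume "\<exists>B. \<forall>J\<in>Fpow I. sum h J \<le> B"
    then obtain B where "\<forall>J\<in>Fpow I. sum h J \<le> B" by blast
    then have "\<forall>J\<in>Fpow I. a * sum h J \<le> a * B"
      using \<open>a > 0\<close> by simp
    then show "\<exists>B. \<forall>J\<in>Fpow I. a * sum h J \<le> B" by blast
  qed
  moreover have "\<And>j. j \<in> I \<Longrightarrow> 0 \<le> a * h j"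
    using nonneg \<open>a > 0\<close> by simp
  ultimately show ?thesis
    by (simp add: pw_summable_on_Fpow_iff nonneg sum_distrib_left[symmetric])
qed

lemma infsum_pw_supersets_le:
  fixes h :: "nat \<Rightarrow> real"
  assumes nonneg: "\<And>j. j \<in> I \<Longrightarrow> 0 \<le> h j" and summable: "pw h summable_on Fpow I"
    and bound: "\<And>J. J \<in> Fpow I \<Longrightarrow> (\<Prod>j\<in>J. 1 + h j) \<le> c" and u: "u \<in> Fpow I"
  shows "infsum (pw h) {v \<in> Fpow I. u \<subseteq> v} \<le> c * pw h u"
proof (rule infsum_le_finite_sums)
  show "pw h summable_on {v \<in> Fpow I. u \<subseteq> v}"
    using summable by (rule summable_on_subset_banach) auto
next
  fix F assume F: "finite F" "F \<subseteq> {v \<in> Fpow I. u \<subseteq> v}"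
  define J where "J = \<Union>F \<union> u"
  have J: "J \<in> Fpow I" using F u by (auto simp: J_def Fpow_def)
  have pw_u: "0 \<le> pw h u"
    using u nonneg by (intro pw_nonneg) (auto simp: Fpow_def)
  have "F \<subseteq> (\<lambda>w. u \<union> w) ` Pow (J - u)"
  proof
    fix v assume "v \<in> F"
    then have "v = u \<union> (v - u)" "v - u \<in> Pow (J - u)"
      using F by (auto simp: J_def)
    then show "v \<in> (\<lambda>w. u \<union> w) ` Pow (J - u)" by blast
  qed
  then have "sum (pw h) F \<le> sum (pw h) ((\<lambda>w. u \<union> w) ` Pow (J - u))"
    using J u by (intro sum_mono2 pw_nonneg nonneg) (auto simp: Fpow_def)
  also have "\<dots> = (\<Sum>w\<in>Pow (J - u). pw h (u \<union> w))"
    by (rule sum.reindex_cong[where l = "\<lambda>w. u \<union> w"]) (auto simp: inj_on_def)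
  also have "\<dots> = (\<Sum>w\<in>Pow (J - u). pw h u * pw h w)"
    using J u by (intro sum.cong refl pw_union) (auto simp: Fpow_def dest: finite_subset)
  also have "\<dots> = pw h u * (\<Prod>j\<in>J - u. 1 + h j)"
    using J by (simp add: Fpow_def sum_distrib_left[symmetric] sum_Pow_pw)
  also have "\<dots> \<le> pw h u * (\<Prod>j\<in>J. 1 + h j)"
    using J nonneg by (intro mult_left_mono pw_u prod_mono2) (auto simp: Fpow_def)
  also have "\<dots> \<le> c * pw h u"
    using mult_left_mono[OF bound[OF J] pw_u] by (simp add: mult.commute)
  finally show "sum (pw h) F \<le> c * pw h u" .
qed

lemma prod_antimono2:
  fixes f :: "'a \<Rightarrow> 'b::linordered_idom"
  assumes "finite B" "A \<subseteq> B" and unit: "\<And>j. j \<in> B \<Longrightarrow> 0 \<le> f j \<and> f j \<le> 1"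
  shows "prod f B \<le> prod f A"
proof -
  have "prod f B = prod f A * prod f (B - A)"
    using assms(1,2) by (metis mult.commute prod.subset_diff)
  also have "\<dots> \<le> prod f A"
    using assms by (intro mult_left_le prod_le_1 prod_nonneg) auto
  finally show ?thesis .
qed

lemma idx_enat: "idx (enat n) = {1..n}"
  by (auto simp: idx_def)

lemma idx_infinity: "idx \<infinity> = {1..}"
  by (auto simp: idx_def)

lemma Fpow_idx_infinity_bounded:
  assumes "J \<in> Fpow (idx \<infinity>)"
  obtains n where "J \<subseteq> {1..n}"
proof -
  have "finite J"
    using assms by (simp add: Fpow_def)
  then obtain n where "J \<subseteq> {..<n}"
    using finite_nat_bounded by blast
  moreover have "J \<subseteq> {1..}"
    using assms by (simp add: Fpow_def idx_infinity)
  ultimately have "J \<subseteq> {1..n}"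
    by (auto simp: subset_iff less_imp_le)
  then show thesis by (rule that)
qed

lemma prod_over_d_infinity_LIMSEQ:
  "prod_over_d_conv \<infinity> f \<Longrightarrow> (\<lambda>n. \<Prod>j=1..n. f j) \<longlonglongrightarrow> prod_over_d \<infinity> f"
  by (simp add: prod_over_d_conv_def prod_over_d_def convergent_LIMSEQ_iff)

lemma prod_over_d_infinityI:
  assumes "(\<lambda>n. \<Prod>j=1..n. f j) \<longlonglongrightarrow> L"
  shows "prod_over_d_conv \<infinity> f" and "prod_over_d \<infinity> f = L"
  using assms by (auto simp: prod_over_d_conv_def prod_over_d_def convergentI limI)

lemma prod_over_d_ge_finite_prods:
  fixes f :: "nat \<Rightarrow> real"
  assumes ge1: "\<And>j. j \<in> idx d \<Longrightarrow> 1 \<le> f j"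
    and bounded: "\<And>J. J \<in> Fpow (idx d) \<Longrightarrow> prod f J \<le> B"
  shows "prod_over_d_conv d f \<and> (\<forall>J\<in>Fpow (idx d). prod f J \<le> prod_over_d d f)"
proof (cases d)
  case (enat n)
  then show ?thesis
    using ge1 by (auto simp: prod_over_d_conv_def prod_over_d_def idx_enat Fpow_def
        intro!: prod_mono2 order_trans[OF zero_le_one])
next
  case infinity
  define P where "P n = (\<Prod>j=1..n. f j)" for n
  have "incseq P"
    unfolding incseq_def P_def using ge1
    by (auto simp: infinity idx_infinity intro!: prod_mono2 order_trans[OF zero_le_one])
  moreover have "\<forall>n. P n \<le> B"
    using bounded by (auto simp: P_def infinity idx_infinity Fpow_def)
  ultimately obtain L where L: "P \<longlonglongrightarrow> L" "\<And>n. P n \<le> L"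
    using incseq_convergent by blast
  have "prod f J \<le> L" if J: "J \<in> Fpow (idx d)" for J
  proof -
    obtain n where n: "J \<subseteq> {1..n}"
      using Fpow_idx_infinity_bounded J[unfolded infinity] by blast
    then have "prod f J \<le> P n"
      unfolding P_def using ge1 J
      by (intro prod_mono2) (auto simp: infinity idx_infinity Fpow_def intro: order_trans[OF zero_le_one])
    then show ?thesis using L(2) by (rule order_trans)
  qed
  then show ?thesis
    using prod_over_d_infinityI[of f L] L(1) by (simp add: infinity P_def[abs_def])
qed

lemma prod_over_d_le_finite_prods:
  fixes f :: "nat \<Rightarrow> real"
  assumes unit: "\<And>j. j \<in> idx d \<Longrightarrow> 0 \<le> f j \<and> f j \<le> 1"
  shows "prod_over_d_conv d f \<and> 0 \<le> prod_over_d d f \<and>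
    (\<forall>J\<in>Fpow (idx d). prod_over_d d f \<le> prod f J)"
proof (cases d)
  case (enat n)
  then show ?thesis
    using unit by (auto simp: prod_over_d_conv_def prod_over_d_def idx_enat Fpow_def
        intro!: prod_antimono2 prod_nonneg)
next
  case infinity
  define P where "P n = (\<Prod>j=1..n. f j)" for n
  have "decseq P"
    unfolding decseq_def P_def using unit
    by (auto simp: infinity idx_infinity intro!: prod_antimono2)
  moreover have P_nonneg: "\<forall>n. 0 \<le> P n"
    using unit by (auto simp: P_def infinity idx_infinity intro!: prod_nonneg)
  ultimately obtain L where L: "P \<longlonglongrightarrow> L" "\<And>n. L \<le> P n"
    using decseq_convergent by blast
  have "0 \<le> L"
    using L(1) P_nonneg by (intro LIMSEQ_le_const) auto
  moreover have "L \<le> prod f J" if J: "J \<in> Fpow (idx d)" for J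
  proof -
    obtain n where n: "J \<subseteq> {1..n}"
      using Fpow_idx_infinity_bounded J[unfolded infinity] by blast
    then have "P n \<le> prod f J"
      unfolding P_def using unit by (intro prod_antimono2) (auto simp: infinity idx_infinity)
    with L(2) show ?thesis by (rule order_trans)
  qed
  ultimately show ?thesis
    using prod_over_d_infinityI[of f L] L(1) by (simp add: infinity P_def[abs_def])
qed

lemma prod_over_d_mono:
  fixes f f' :: "nat \<Rightarrow> real"
  assumes le: "\<And>j. j \<in> idx d \<Longrightarrow> 0 \<le> f j \<and> f j \<le> f' j"
    and "prod_over_d_conv d f" "prod_over_d_conv d f'"
  shows "prod_over_d d f \<le> prod_over_d d f'"
proof (cases d)
  case (enat n)
  then show ?thesis
    using le by (auto simp: prod_over_d_def idx_enat intro!: prod_mono)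
next
  case infinity
  have "(\<Prod>j=1..n. f j) \<le> (\<Prod>j=1..n. f' j)" for n
    using le by (auto simp: infinity idx_infinity intro!: prod_mono)
  then show ?thesis
    using assms(2,3) unfolding infinity
    by (intro LIMSEQ_le[OF prod_over_d_infinity_LIMSEQ prod_over_d_infinity_LIMSEQ]) auto
qed

lemma U_eq_Fpow_idx: "U d = Fpow (idx d)"
  by (auto simp: U_def Fpow_def)

lemma power_card_mult_pw: "C ^ (2 * card v) * pw g v = pw (\<lambda>j. C^2 * g j) v"
  by (simp add: pw_scale power_mult)

lemma S_pw_iff:
  assumes "\<And>j. j \<in> idx d \<Longrightarrow> 0 \<le> g j"
  shows "S d C (pw g) \<longleftrightarrow> pw (\<lambda>j. C^2 * g j) summable_on U d"
  using assms by (auto simp: S_def power_card_mult_pw U_def intro!: pw_nonneg)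

lemma Tup_pw: "Tup d C (pw g) u = infsum (pw (\<lambda>j. C^2 * g j)) {v \<in> U d. u \<subseteq> v}"
  by (simp add: Tup_def power_card_mult_pw)

lemma Tdown_pw:
  assumes "finite u" and conv: "prod_over_d_conv d (\<lambda>j. if j \<in> u then 1 else 1 - g j)"
  shows "Tdown d C (pw g) u =
    pw g u / C ^ (2 * card u) * prod_over_d d (\<lambda>j. if j \<in> u then 1 else 1 - g j)"
proof (cases d)
  case (enat n)
  then show ?thesis
    unfolding Tdown_def prod_over_d_def Delta_pw_interval[OF \<open>finite u\<close>]
    by (simp add: divide_inverse mult_ac)
next
  case infinity
  have "(\<lambda>s. Delta ({1..s} - u) (pw g) u) \<longlonglongrightarrow>
      pw g u * prod_over_d \<infinity> (\<lambda>j. if j \<in> u then 1 else 1 - g j)"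
    unfolding Delta_pw_interval[OF \<open>finite u\<close>]
    using conv infinity by (intro tendsto_mult_left prod_over_d_infinity_LIMSEQ) simp
  then show ?thesis
    by (simp add: Tdown_def infinity limI divide_inverse mult_ac)
qed

lemma M_pw_le_one:
  assumes "M d (pw g)" "j \<in> idx d"
  shows "g j \<le> 1"
proof -
  have "Delta {j} (pw g) {} = 1 - g j"
    by (simp add: Delta_pw pw_def)
  moreover have "{j} \<in> U d" "{} \<in> U d"
    using assms(2) by (auto simp: U_def)
  ultimately show ?thesis
    using assms(1) unfolding M_def by force
qed

lemma infsum_pw_supersets_bounds:
  fixes h :: "nat \<Rightarrow> real"
  assumes nonneg: "\<And>j. j \<in> idx d \<Longrightarrow> 0 \<le> h j" and summable: "pw h summable_on U d"
  shows "prod_over_d_conv d (\<lambda>j. 1 + h j) \<and> 1 \<le> prod_over_d d (\<lambda>j. 1 + h j) \<and>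
    (\<forall>u\<in>U d. pw h u \<le> infsum (pw h) {v \<in> U d. u \<subseteq> v} \<and>
       infsum (pw h) {v \<in> U d. u \<subseteq> v} \<le> prod_over_d d (\<lambda>j. 1 + h j) * pw h u)"
proof -
  have summable_Fpow: "pw h summable_on Fpow (idx d)"
    using summable by (simp add: U_eq_Fpow_idx)
  then have "\<exists>B. \<forall>J\<in>Fpow (idx d). sum h J \<le> B"
    by (simp add: pw_summable_on_Fpow_iff[OF nonneg])
  then obtain B where B: "\<forall>J\<in>Fpow (idx d). sum h J \<le> B" ..
  have prods_bounded: "(\<Prod>j\<in>J. 1 + h j) \<le> exp B" if J: "J \<in> Fpow (idx d)" for J
  proof -
    have "(\<Prod>j\<in>J. 1 + h j) \<le> exp (sum h J)"
      using J nonneg by (intro prod_le_exp_sum) (auto simp: Fpow_def)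
    also have "\<dots> \<le> exp B"
      using B J by simp
    finally show ?thesis .
  qed
  have "prod_over_d_conv d (\<lambda>j. 1 + h j) \<and>
      (\<forall>J\<in>Fpow (idx d). (\<Prod>j\<in>J. 1 + h j) \<le> prod_over_d d (\<lambda>j. 1 + h j))"
    using nonneg prods_bounded by (intro prod_over_d_ge_finite_prods[where B = "exp B"]) auto
  then have conv: "prod_over_d_conv d (\<lambda>j. 1 + h j)"
    and finite_prods: "\<And>J. J \<in> Fpow (idx d) \<Longrightarrow> (\<Prod>j\<in>J. 1 + h j) \<le> prod_over_d d (\<lambda>j. 1 + h j)"
    by simp_all
  have "1 \<le> prod_over_d d (\<lambda>j. 1 + h j)"
    using finite_prods[of "{}"] by (simp add: Fpow_def)
  moreover have "pw h u \<le> infsum (pw h) {v \<in> U d. u \<subseteq> v}" if u: "u \<in> U d" for u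
    using finite_sum_le_infsum[of "pw h" "{v \<in> U d. u \<subseteq> v}" "{u}"] u nonneg
      summable_on_subset_banach[OF summable, of "{v \<in> U d. u \<subseteq> v}"]
    by (auto simp: U_def intro!: pw_nonneg)
  moreover have "infsum (pw h) {v \<in> U d. u \<subseteq> v} \<le> prod_over_d d (\<lambda>j. 1 + h j) * pw h u"
    if u: "u \<in> U d" for u
    using infsum_pw_supersets_le[OF nonneg summable_Fpow finite_prods] u by (simp add: U_eq_Fpow_idx)
  ultimately show ?thesis
    using conv by simp
qed

lemma Tup_product_weights_bounds:
  fixes g :: "nat \<Rightarrow> real"
  assumes "C \<noteq> 0" and nonneg: "\<And>j. j \<in> idx d \<Longrightarrow> 0 \<le> g j" and S: "S d C (pw g)"
  shows "prod_over_d_conv d (\<lambda>j. 1 + C^2 * g j) \<and> 1 \<le> prod_over_d d (\<lambda>j. 1 + C^2 * g j) \<and>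
    S d C (pw (\<lambda>j. C^2 * g j)) \<and>
    (\<forall>u\<in>U d. pw (\<lambda>j. C^2 * g j) u \<le> Tup d C (pw g) u \<and>
       Tup d C (pw g) u \<le> prod_over_d d (\<lambda>j. 1 + C^2 * g j) * pw (\<lambda>j. C^2 * g j) u)"
proof -
  have h_nonneg: "\<And>j. j \<in> idx d \<Longrightarrow> 0 \<le> C^2 * g j"
    using nonneg by simp
  have "pw (\<lambda>j. C^2 * g j) summable_on U d"
    using S nonneg by (simp add: S_pw_iff)
  moreover have "S d C (pw (\<lambda>j. C^2 * g j)) \<longleftrightarrow>
      pw (\<lambda>j. C^2 * (C^2 * g j)) summable_on Fpow (idx d)"
    using S_pw_iff[OF h_nonneg] by (simp only: U_eq_Fpow_idx)
  moreover have "\<dots> \<longleftrightarrow> pw (\<lambda>j. C^2 * g j) summable_on Fpow (idx d)"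
    using h_nonneg \<open>C \<noteq> 0\<close> by (intro pw_scaled_summable_on_Fpow_iff) auto
  ultimately show ?thesis
    using infsum_pw_supersets_bounds[OF h_nonneg] by (simp add: Tup_pw U_eq_Fpow_idx)
qed

lemma Tdown_product_weights_bounds:
  fixes g :: "nat \<Rightarrow> real"
  assumes nonneg: "\<And>j. j \<in> idx d \<Longrightarrow> 0 \<le> g j" and M: "M d (pw g)"
  shows "prod_over_d_conv d (\<lambda>j. 1 - g j) \<and> 0 \<le> prod_over_d d (\<lambda>j. 1 - g j) \<and>
    prod_over_d d (\<lambda>j. 1 - g j) \<le> 1 \<and>
    (\<forall>u\<in>U d. prod_over_d d (\<lambda>j. 1 - g j) * pw (\<lambda>j. g j / C^2) u \<le> Tdown d C (pw g) u \<and>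
       Tdown d C (pw g) u \<le> pw (\<lambda>j. g j / C^2) u)"
proof -
  have unit: "\<And>j. j \<in> idx d \<Longrightarrow> 0 \<le> 1 - g j \<and> 1 - g j \<le> 1"
    using nonneg M_pw_le_one[OF M] by simp
  then have conv: "prod_over_d_conv d (\<lambda>j. 1 - g j)" and "0 \<le> prod_over_d d (\<lambda>j. 1 - g j)"
    and "prod_over_d d (\<lambda>j. 1 - g j) \<le> 1"
    using prod_over_d_le_finite_prods[of d "\<lambda>j. 1 - g j"] by (auto simp: Fpow_def)
  moreover have "prod_over_d d (\<lambda>j. 1 - g j) * pw (\<lambda>j. g j / C^2) u \<le> Tdown d C (pw g) u \<and>
       Tdown d C (pw g) u \<le> pw (\<lambda>j. g j / C^2) u" if u: "u \<in> U d" for u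
  proof -
    define Q where "Q = prod_over_d d (\<lambda>j. if j \<in> u then 1 else 1 - g j)"
    have "\<And>j. j \<in> idx d \<Longrightarrow> 0 \<le> (if j \<in> u then 1 else 1 - g j) \<and> (if j \<in> u then 1 else 1 - g j) \<le> 1"
      using unit by simp
    then have conv_u: "prod_over_d_conv d (\<lambda>j. if j \<in> u then 1 else 1 - g j)" and Q_le: "Q \<le> 1"
      using prod_over_d_le_finite_prods[of d "\<lambda>j. if j \<in> u then 1 else 1 - g j"]
      by (auto simp: Q_def Fpow_def)
    have c_le: "prod_over_d d (\<lambda>j. 1 - g j) \<le> Q"
      unfolding Q_def using unit conv conv_u by (intro prod_over_d_mono) auto
    have zeta_nonneg: "0 \<le> pw (\<lambda>j. g j / C^2) u"
      using u nonneg by (intro pw_nonneg) (auto simp: U_def)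
    have "Tdown d C (pw g) u = Q * pw (\<lambda>j. g j / C^2) u"
      using u conv_u by (simp add: Tdown_pw pw_divide power_mult Q_def U_def)
    then show ?thesis
      using mult_right_mono[OF c_le zeta_nonneg] mult_right_mono[OF Q_le zeta_nonneg] by simp
  qed
  ultimately show ?thesis
    using conv by blast
qed

lemma S_pw_divide_square_iff:
  fixes g :: "nat \<Rightarrow> real"
  assumes "C \<noteq> 0" and nonneg: "\<And>j. j \<in> idx d \<Longrightarrow> 0 \<le> g j"
  shows "S d C (pw (\<lambda>j. g j / C^2)) \<longleftrightarrow> S d C (pw g)"
proof -
  have "\<And>j. j \<in> idx d \<Longrightarrow> 0 \<le> g j / C^2"
    using nonneg by simp
  then show ?thesis
    using assms by (simp add: S_pw_iff pw_scaled_summable_on_Fpow_iff U_eq_Fpow_idx)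
qed

theorem mainTheorem8:
  fixes d :: enat and C :: real and g :: "nat \<Rightarrow> real"
  assumes C: "C > 0" and g: "is_pw_seq d g"
  shows
   "(S d C (pw g) \<longrightarrow>
      (let c = prod_over_d d (\<lambda>j. 1 + C^2 * g j);
           \<eta> = pw (\<lambda>j. C^2 * g j)
       in prod_over_d_conv d (\<lambda>j. 1 + C^2 * g j) \<and> 1 \<le> c \<and>
          S d C \<eta> \<and>
          (\<forall>u\<in>U d. \<eta> u \<le> Tup d C (pw g) u \<and> Tup d C (pw g) u \<le> c * \<eta> u)))
    \<and>
    (M d (pw g) \<longrightarrow>
      (let c' = prod_over_d d (\<lambda>j. 1 - g j);
           \<zeta> = pw (\<lambda>j. g j / C^2)
       in prod_over_d_conv d (\<lambda>j. 1 - g j) \<and> 0 \<le> c' \<and> c' \<le> 1 \<and>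
          (\<forall>u\<in>U d. c' * \<zeta> u \<le> Tdown d C (pw g) u \<and> Tdown d C (pw g) u \<le> \<zeta> u) \<and>
          (S d C \<zeta> \<longleftrightarrow> S d C (pw g))))"
proof -
  have nonneg: "\<And>j. j \<in> idx d \<Longrightarrow> 0 \<le> g j"
    using g by (simp add: is_pw_seq_def)
  have "C \<noteq> 0"
    using C by simp
  show ?thesis
    using Tup_product_weights_bounds[OF \<open>C \<noteq> 0\<close> nonneg]
      Tdown_product_weights_bounds[OF nonneg, where C = C] S_pw_divide_square_iff[OF \<open>C \<noteq> 0\<close> nonneg]
    by (simp add: Let_def)
qed

end
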